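(* Let $\sigma>0$, $a>0$, $m\in\mathbb R$, and $u_0(x)=\sqrt{\frac{a}{2\pi}}e^{-\frac a2(x-m)^2}$. Then the solution $u$ of $$\partial_t u=\sigma^2\partial_{xx}u+\Big(-x^2+\int_{\mathbb R}y^2u(t,y)\,dy\Big)u,\quad t>0,\ x\in\mathbb R,\qquad u(0,\cdot)=u_0,$$ remains Gaussian for $t>0$ and is given by $$u(t,x)=\sqrt{\frac{a(t)}{2\pi}}e^{-\frac{a(t)}{2}(x-m(t))^2},\quad a(t):=\frac{a\sigma+\tanh(2\sigma t)}{\sigma(1+a\sigma\tanh(2\sigma t))},\quad m(t):=\frac{ma\sigma}{a\sigma\cosh(2\sigma t)+\sinh(2\sigma t)}.$$
   Context: The solution is the unique solution in $C(\mathbb R_+;L^1(\mathbb R))\cap L^1_{\rm loc}((0,\infty);\{g\in L^1(\mathbb R):\int x^2|g|<\infty\})$. *)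

theory Defs
  imports "HOL-Analysis.Analysis"
begin

definition gaussian :: "real \<Rightarrow> real \<Rightarrow> real \<Rightarrow> real" where
  "gaussian a m x = sqrt (a / (2 * pi)) * exp (- (a / 2) * (x - m)^2)"

definition a_t :: "real \<Rightarrow> real \<Rightarrow> real \<Rightarrow> real" where
  "a_t \<sigma> a t = (a * \<sigma> + tanh (2 * \<sigma> * t)) / (\<sigma> * (1 + a * \<sigma> * tanh (2 * \<sigma> * t)))"

definition m_t :: "real \<Rightarrow> real \<Rightarrow> real \<Rightarrow> real \<Rightarrow> real" where
  "m_t \<sigma> a m t = m * a * \<sigma> / (a * \<sigma> * cosh (2 * \<sigma> * t) + sinh (2 * \<sigma> * t))"

text \<open>Solution of
  d/dt u = sigma^2 u_xx + (-x^2 + int y^2 u(t,y) dy) u, t>0, x real, u(0) = u0,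
  in the class C(R_+; L^1) \<inter> L^1_loc((0,\<infinity>); L^1 with weight x^2);
  the equation is required to hold classically for t > 0.\<close>
definition is_solution :: "real \<Rightarrow> (real \<Rightarrow> real) \<Rightarrow> (real \<Rightarrow> real \<Rightarrow> real) \<Rightarrow> bool" where
  "is_solution \<sigma> u0 u \<longleftrightarrow>
     u 0 = u0
   \<and> (\<forall>t\<ge>0. u t absolutely_integrable_on UNIV)
   \<and> (\<forall>t0\<ge>0. ((\<lambda>t. integral UNIV (\<lambda>y. \<bar>u t y - u t0 y\<bar>)) \<longlongrightarrow> 0) (at t0 within {0..}))
   \<and> (\<forall>t>0. (\<lambda>y. y^2 * u t y) absolutely_integrable_on UNIV)
   \<and> (\<forall>c d. 0 < c \<and> c \<le> d \<longrightarrow>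
        (\<lambda>t. integral UNIV (\<lambda>y. y^2 * \<bar>u t y\<bar>)) integrable_on {c..d})
   \<and> (\<forall>t>0. \<forall>x. u t differentiable (at x) \<and> deriv (u t) differentiable (at x))
   \<and> (\<forall>t>0. \<forall>x. ((\<lambda>s. u s x) has_real_derivative
          (\<sigma>^2 * deriv (deriv (u t)) x
           + (- (x^2) + integral UNIV (\<lambda>y. y^2 * u t y)) * u t x)) (at t))"

end

theory Submission
  imports Defs "HOL-Probability.Distributions"
begin

text \<open>For a Gaussian with precision \<open>A\<close> and mean \<open>M\<close> the second moment is \<open>1/A + M\<^sup>2\<close>,
  so the nonlocal term is explicit and inserting the Gaussian ansatz into the equation
  reduces it to the ODE system \<open>A' = 2 - 2\<sigma>\<^sup>2A\<^sup>2\<close>, \<open>M' = -2M/A\<close>. Writing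
  \<open>a(t) = N/(\<sigma>Q)\<close> and \<open>m(t) = ma\<sigma>/N\<close> with \<open>N = a\<sigma> cosh(2\<sigma>t) + sinh(2\<sigma>t)\<close>,
  \<open>Q = cosh(2\<sigma>t) + a\<sigma> sinh(2\<sigma>t)\<close>, the relations \<open>N' = 2\<sigma>Q\<close>, \<open>Q' = 2\<sigma>N\<close> show
  that the given parameters solve this system. Continuity in \<open>L\<^sup>1\<close> follows from
  pointwise continuity by Scheffe's lemma, all the Gaussians being probability densities.\<close>

lemma has_bochner_integral_lborelD:
  fixes f :: "real \<Rightarrow> real"
  assumes "has_bochner_integral lborel f I"
  shows "f absolutely_integrable_on UNIV" "integral UNIV f = I"
  using assms integral_lborel[of f]
  by (auto simp: has_bochner_integral_iff integrable_completion set_integrable_def)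

text \<open>\<open>|f - g| = f + g - 2 min f g\<close>, and \<open>min (f t) (f t0)\<close> is dominated by \<open>f t0\<close>.\<close>

lemma scheffe_tendsto_integral_abs_diff:
  fixes f :: "'a::first_countable_topology \<Rightarrow> real \<Rightarrow> real"
  assumes "t0 \<in> S"
    and int: "\<And>t. t \<in> S \<Longrightarrow> integrable lborel (f t)"
    and nonneg: "\<And>t y. t \<in> S \<Longrightarrow> 0 \<le> f t y"
    and mass: "\<And>t. t \<in> S \<Longrightarrow> integral UNIV (f t) = integral UNIV (f t0)"
    and lim: "\<And>y. ((\<lambda>t. f t y) \<longlongrightarrow> f t0 y) (at t0 within S)"
  shows "((\<lambda>t. integral UNIV (\<lambda>y. \<bar>f t y - f t0 y\<bar>)) \<longlongrightarrow> 0) (at t0 within S)"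
proof -
  have int_min: "integrable lborel (\<lambda>y. min (f t y) (f t0 y))" if "t \<in> S" for t
    using int[OF that] int[OF \<open>t0 \<in> S\<close>] by (rule Bochner_Integration.integrable_min)
  have abs_diff: "integral UNIV (\<lambda>y. \<bar>f t y - f t0 y\<bar>)
      = 2 * integral UNIV (f t0) - 2 * integral UNIV (\<lambda>y. min (f t y) (f t0 y))" if "t \<in> S" for t
  proof -
    have "(\<lambda>y. \<bar>f t y - f t0 y\<bar>) = (\<lambda>y. f t y + f t0 y - 2 * min (f t y) (f t0 y))"
      by (auto simp: min_def)
    then show ?thesis
      using int[OF that] int[OF \<open>t0 \<in> S\<close>] int_min[OF that] mass[OF that]
      by (simp add: integral_lborel)
  qed
  have "((\<lambda>t. integral UNIV (\<lambda>y. min (f t y) (f t0 y))) \<longlongrightarrow> integral UNIV (f t0)) (at t0 within S)"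
    unfolding tendsto_at_iff_sequentially comp_def
  proof (intro allI impI)
    fix X :: "nat \<Rightarrow> 'a" assume X: "\<forall>i. X i \<in> S - {t0}" and "X \<longlonglongrightarrow> t0"
    have "(\<lambda>k. f (X k) y) \<longlonglongrightarrow> f t0 y" for y
      using lim \<open>X \<longlonglongrightarrow> t0\<close> X unfolding tendsto_at_iff_sequentially comp_def by blast
    then have conv: "(\<lambda>k. min (f (X k) y) (f t0 y)) \<longlonglongrightarrow> min (f t0 y) (f t0 y)" for y
      by (intro tendsto_intros)
    show "(\<lambda>k. integral UNIV (\<lambda>y. min (f (X k) y) (f t0 y))) \<longlonglongrightarrow> integral UNIV (f t0)"
    proof (rule dominated_convergence(2))
      show "(\<lambda>y. min (f (X k) y) (f t0 y)) integrable_on UNIV" for k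
        using X int_min by (auto intro: integrable_on_lborel)
      show "f t0 integrable_on UNIV" using int[OF \<open>t0 \<in> S\<close>] by (rule integrable_on_lborel)
      show "norm (min (f (X k) y) (f t0 y)) \<le> f t0 y" for k y
        using X nonneg[of "X k" y] nonneg[OF \<open>t0 \<in> S\<close>, of y] by auto
      show "(\<lambda>k. min (f (X k) y) (f t0 y)) \<longlonglongrightarrow> f t0 y" for y
        using conv by simp
    qed
  qed
  then have "((\<lambda>t. 2 * integral UNIV (f t0) - 2 * integral UNIV (\<lambda>y. min (f t y) (f t0 y)))
      \<longlongrightarrow> 2 * integral UNIV (f t0) - 2 * integral UNIV (f t0)) (at t0 within S)"
    by (intro tendsto_intros)
  then have "((\<lambda>t. 2 * integral UNIV (f t0) - 2 * integral UNIV (\<lambda>y. min (f t y) (f t0 y)))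
      \<longlongrightarrow> 0) (at t0 within S)"
    by simp
  then show ?thesis
    by (rule Lim_transform_eventually) (auto simp: eventually_at_filter abs_diff)
qed

lemma gaussian_eq_normal_density:
  assumes "0 < A"
  shows "gaussian A M = normal_density M (1 / sqrt A)"
proof
  fix x
  have "1 / sqrt (2 * pi * (1 / sqrt A)\<^sup>2) = sqrt (A / (2 * pi))"
    using assms by (simp add: real_sqrt_divide power_divide real_sqrt_mult)
  moreover have "- (x - M)\<^sup>2 / (2 * (1 / sqrt A)\<^sup>2) = - (A / 2) * (x - M)^2"
    using assms by (simp add: power_divide)
  ultimately show "gaussian A M x = normal_density M (1 / sqrt A) x"
    unfolding gaussian_def normal_density_def by simp
qed

lemma gaussian_nonneg: "0 \<le> A \<Longrightarrow> 0 \<le> gaussian A M x"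
  unfolding gaussian_def by simp

lemma has_bochner_integral_gaussian:
  assumes "0 < A"
  shows "has_bochner_integral lborel (gaussian A M) 1"
  using assms integrable_normal_density[of "1 / sqrt A" M] integral_normal_density[of "1 / sqrt A" M]
  by (simp add: gaussian_eq_normal_density has_bochner_integral_iff)

lemma integrable_gaussian: "0 < A \<Longrightarrow> integrable lborel (gaussian A M)"
  by (rule integrable.intros[OF has_bochner_integral_gaussian])

lemma has_bochner_integral_gaussian_second_moment:
  assumes "0 < A"
  shows "has_bochner_integral lborel (\<lambda>y. y^2 * gaussian A M y) (1 / A + M^2)"
proof -
  let ?g = "normal_density M (1 / sqrt A)"
  have s: "0 < 1 / sqrt A" using assms by simp
  have "has_bochner_integral lborel (\<lambda>y. ?g y * (y - M)^(2 * 1)) (1 / A)"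
    using normal_moment_even[OF s, of M 1] assms by (simp add: power_divide)
  moreover have "has_bochner_integral lborel (\<lambda>y. ?g y * y) M"
    using normal_moment_nz_1[OF s] .
  moreover have "has_bochner_integral lborel ?g 1"
    using has_bochner_integral_gaussian[OF assms] by (simp add: gaussian_eq_normal_density[OF assms])
  ultimately have "has_bochner_integral lborel
      (\<lambda>y. ?g y * (y - M)^(2 * 1) + 2 * M * (?g y * y) - M^2 * ?g y) (1 / A + 2 * M * M - M^2 * 1)"
    by (intro has_bochner_integral_diff has_bochner_integral_add has_bochner_integral_mult_right)
  moreover have "(\<lambda>y. ?g y * (y - M)^(2 * 1) + 2 * M * (?g y * y) - M^2 * ?g y)
      = (\<lambda>y. y^2 * gaussian A M y)"
    by (simp add: gaussian_eq_normal_density[OF assms] power2_eq_square algebra_simps)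
  ultimately show ?thesis by (simp add: power2_eq_square add.commute)
qed

lemma has_real_derivative_gaussian:
  "(gaussian A M has_real_derivative gaussian A M x * (- A * (x - M))) (at x)"
  unfolding gaussian_def[abs_def]
  by (auto intro!: derivative_eq_intros simp: power2_eq_square algebra_simps)

lemma deriv_gaussian: "deriv (gaussian A M) = (\<lambda>x. gaussian A M x * (- A * (x - M)))"
  using has_real_derivative_gaussian DERIV_imp_deriv by blast

lemma has_real_derivative_deriv_gaussian:
  "(deriv (gaussian A M) has_real_derivative gaussian A M x * (A^2 * (x - M)^2 - A)) (at x)"
  unfolding deriv_gaussian
  by (auto intro!: derivative_eq_intros has_real_derivative_gaussian
      simp: power2_eq_square algebra_simps)

lemma deriv_deriv_gaussian:
  "deriv (deriv (gaussian A M)) x = gaussian A M x * (A^2 * (x - M)^2 - A)"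
  using has_real_derivative_deriv_gaussian DERIV_imp_deriv by blast

lemma has_real_derivative_gaussian_parameters:
  assumes A: "(A has_real_derivative A') (at t)" and M: "(M has_real_derivative M') (at t)"
    and pos: "0 < A t"
  shows "((\<lambda>s. gaussian (A s) (M s) x) has_real_derivative
     gaussian (A t) (M t) x * (A' / (2 * A t) - A' / 2 * (x - M t)^2 + A t * M' * (x - M t))) (at t)"
proof -
  let ?c = "A t / (2 * pi)"
  have "((\<lambda>s. A s / (2 * pi)) has_real_derivative A' / (2 * pi)) (at t)"
    using A by (auto intro!: derivative_eq_intros)
  then have "((\<lambda>s. sqrt (A s / (2 * pi))) has_real_derivative inverse (sqrt ?c) / 2 * (A' / (2 * pi))) (at t)"
    using pos by (intro DERIV_chain2[OF DERIV_real_sqrt]) auto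
  moreover have "inverse (sqrt ?c) / 2 * (A' / (2 * pi)) = sqrt ?c * (A' / (2 * A t))"
    using pos by (simp add: field_simps)
  moreover have "((\<lambda>s. exp (- (A s / 2) * (x - M s)^2)) has_real_derivative
      exp (- (A t / 2) * (x - M t)^2) * (- (A' / 2) * (x - M t)^2 + A t * M' * (x - M t))) (at t)"
    using A M by (auto intro!: derivative_eq_intros simp: power2_eq_square algebra_simps)
  ultimately show ?thesis
    unfolding gaussian_def by (auto elim!: DERIV_cong[OF DERIV_mult] simp: algebra_simps)
qed

lemma gaussian_family_has_real_derivative:
  assumes A: "(A has_real_derivative 2 - 2 * \<sigma>^2 * (A t)^2) (at t)"
    and M: "(M has_real_derivative - 2 * M t / A t) (at t)"
    and pos: "0 < A t"
  shows "((\<lambda>s. gaussian (A s) (M s) x) has_real_derivative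
     \<sigma>^2 * deriv (deriv (gaussian (A t) (M t))) x
       + (- (x^2) + (1 / A t + (M t)^2)) * gaussian (A t) (M t) x) (at t)"
proof (rule DERIV_cong[OF has_real_derivative_gaussian_parameters[OF A M pos]])
  show "gaussian (A t) (M t) x * ((2 - 2 * \<sigma>^2 * (A t)^2) / (2 * A t)
      - (2 - 2 * \<sigma>^2 * (A t)^2) / 2 * (x - M t)^2 + A t * (- 2 * M t / A t) * (x - M t))
    = \<sigma>^2 * deriv (deriv (gaussian (A t) (M t))) x
      + (- (x^2) + (1 / A t + (M t)^2)) * gaussian (A t) (M t) x"
    using pos by (simp add: deriv_deriv_gaussian field_simps power2_eq_square)
qed

lemma is_solution_gaussian_family:
  assumes pos: "\<And>t. 0 \<le> t \<Longrightarrow> 0 < A t"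
    and A: "\<And>t. 0 \<le> t \<Longrightarrow> (A has_real_derivative 2 - 2 * \<sigma>^2 * (A t)^2) (at t)"
    and M: "\<And>t. 0 \<le> t \<Longrightarrow> (M has_real_derivative - 2 * M t / A t) (at t)"
  shows "is_solution \<sigma> (gaussian (A 0) (M 0)) (\<lambda>t x. gaussian (A t) (M t) x)"
proof -
  have cont: "continuous_on {0..} A" "continuous_on {0..} M"
    using A M by (auto intro!: continuous_at_imp_continuous_on DERIV_isCont)
  note mass = has_bochner_integral_lborelD[OF has_bochner_integral_gaussian[OF pos]]
  note moment = has_bochner_integral_lborelD[OF has_bochner_integral_gaussian_second_moment[OF pos]]
  have L1: "((\<lambda>t. integral UNIV (\<lambda>y. \<bar>gaussian (A t) (M t) y - gaussian (A t0) (M t0) y\<bar>)) \<longlongrightarrow> 0)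
      (at t0 within {0..})" if "0 \<le> t0" for t0
  proof (rule scheffe_tendsto_integral_abs_diff)
    show "((\<lambda>t. gaussian (A t) (M t) y) \<longlongrightarrow> gaussian (A t0) (M t0) y) (at t0 within {0..})" for y
      using that cont pos[OF that] unfolding gaussian_def continuous_on_def
      by (auto intro!: tendsto_intros)
  qed (use that pos mass in \<open>auto intro: gaussian_nonneg less_imp_le integrable_gaussian\<close>)
  have "continuous_on {0..} (\<lambda>t. 1 / A t + (M t)^2)"
    using cont pos by (intro continuous_intros) (auto simp: less_imp_neq[symmetric])
  then have moment_integrable:
    "(\<lambda>t. integral UNIV (\<lambda>y. y^2 * \<bar>gaussian (A t) (M t) y\<bar>)) integrable_on {c..d}" if "0 < c" for c d
  proof (rule integrable_eq[OF integrable_continuous_real[OF continuous_on_subset]])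
    show "{c..d} \<subseteq> {0..}" using that by auto
    show "1 / A t + (M t)^2 = integral UNIV (\<lambda>y. y^2 * \<bar>gaussian (A t) (M t) y\<bar>)" if "t \<in> {c..d}" for t
      using \<open>0 < c\<close> that pos[of t] moment[of t] gaussian_nonneg[of "A t"] by auto
  qed
  have differentiable: "gaussian A' M' differentiable (at x)" "deriv (gaussian A' M') differentiable (at x)"
    for A' M' x
    unfolding real_differentiable_def
    using has_real_derivative_gaussian has_real_derivative_deriv_gaussian by blast+
  show ?thesis
    unfolding is_solution_def
    using mass moment L1 moment_integrable differentiable
      gaussian_family_has_real_derivative[OF A M pos]
    by auto
qed

lemma a_t_eq_cosh_sinh:
  fixes \<sigma> a t :: real
  shows "a_t \<sigma> a t = (a * \<sigma> * cosh (2 * \<sigma> * t) + sinh (2 * \<sigma> * t))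
    / (\<sigma> * (cosh (2 * \<sigma> * t) + a * \<sigma> * sinh (2 * \<sigma> * t)))"
proof -
  have "cosh (2 * \<sigma> * t) \<noteq> 0" by (simp add: less_imp_neq[symmetric])
  then show ?thesis
    unfolding a_t_def tanh_def
    by (simp add: add_divide_distrib[symmetric] divide_simps mult.commute)
qed

lemma
  fixes \<sigma> a t :: real
  assumes "0 < \<sigma>" "0 < a" "0 \<le> t"
  shows a_t_numerator_pos: "0 < a * \<sigma> * cosh (2 * \<sigma> * t) + sinh (2 * \<sigma> * t)"
    and a_t_denominator_pos: "0 < cosh (2 * \<sigma> * t) + a * \<sigma> * sinh (2 * \<sigma> * t)"
    and a_t_pos: "0 < a_t \<sigma> a t"
proof -
  have "0 \<le> sinh (2 * \<sigma> * t)" "0 < cosh (2 * \<sigma> * t)" using assms by simp_all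
  then show "0 < a * \<sigma> * cosh (2 * \<sigma> * t) + sinh (2 * \<sigma> * t)"
      "0 < cosh (2 * \<sigma> * t) + a * \<sigma> * sinh (2 * \<sigma> * t)"
    using assms by (simp_all add: add_pos_nonneg)
  then show "0 < a_t \<sigma> a t"
    using assms by (simp add: a_t_eq_cosh_sinh)
qed

lemma
  fixes \<sigma> a m t :: real
  assumes "0 < \<sigma>" "0 < a" "0 \<le> t"
  shows has_real_derivative_a_t: "(a_t \<sigma> a has_real_derivative 2 - 2 * \<sigma>^2 * (a_t \<sigma> a t)^2) (at t)"
    and has_real_derivative_m_t: "(m_t \<sigma> a m has_real_derivative - 2 * m_t \<sigma> a m t / a_t \<sigma> a t) (at t)"
proof -
  define N where "N s = a * \<sigma> * cosh (2 * \<sigma> * s) + sinh (2 * \<sigma> * s)" for s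
  define Q where "Q s = cosh (2 * \<sigma> * s) + a * \<sigma> * sinh (2 * \<sigma> * s)" for s
  have N': "(N has_real_derivative 2 * \<sigma> * Q t) (at t)"
    and Q': "(Q has_real_derivative 2 * \<sigma> * N t) (at t)"
    unfolding N_def[abs_def] Q_def[abs_def]
    by (auto intro!: derivative_eq_intros simp: algebra_simps)
  have pos: "0 < N t" "0 < Q t"
    unfolding N_def Q_def using a_t_numerator_pos[OF assms] a_t_denominator_pos[OF assms] by simp_all
  have a_t: "a_t \<sigma> a = (\<lambda>s. N s / (\<sigma> * Q s))" and m_t: "m_t \<sigma> a m = (\<lambda>s. m * a * \<sigma> / N s)"
    unfolding N_def Q_def by (auto simp: a_t_eq_cosh_sinh m_t_def)
  show "(a_t \<sigma> a has_real_derivative 2 - 2 * \<sigma>^2 * (a_t \<sigma> a t)^2) (at t)"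
    unfolding a_t using pos assms
    by (auto intro!: derivative_eq_intros N' Q' simp: field_simps power2_eq_square)
  show "(m_t \<sigma> a m has_real_derivative - 2 * m_t \<sigma> a m t / a_t \<sigma> a t) (at t)"
    unfolding a_t m_t using pos assms
    by (auto intro!: derivative_eq_intros N' simp: field_simps power2_eq_square)
qed

theorem proposition2p2:
  fixes \<sigma> a m :: real
  assumes "\<sigma> > 0" and "a > 0"
  shows "is_solution \<sigma> (gaussian a m)
           (\<lambda>t x. gaussian (a_t \<sigma> a t) (m_t \<sigma> a m t) x)"
proof -
  have "a_t \<sigma> a 0 = a" "m_t \<sigma> a m 0 = m"
    using assms by (simp_all add: a_t_def m_t_def)
  moreover have "is_solution \<sigma> (gaussian (a_t \<sigma> a 0) (m_t \<sigma> a m 0))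
      (\<lambda>t x. gaussian (a_t \<sigma> a t) (m_t \<sigma> a m t) x)"
    using assms by (intro is_solution_gaussian_family a_t_pos has_real_derivative_a_t has_real_derivative_m_t)
  ultimately show ?thesis by simp
qed

end
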